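(* Consider $n$ users with features $x_1,\dots,x_n\in\mathbb{R}^\ell$, nonnegative embedding weights $\widetilde{w}_{ji}\ge 0$, and any linear graph-based classifier $h=h_{\theta,b}$. If users update via the myopic best-response dynamics described below, then for every user $i\in[n]$ there is at most one round $t\ge 1$ with $x_i^{(t)}\neq x_i^{(t-1)}$.
   Context: Embeddings: $\phi(x_i;x_{-i})=\widetilde{w}_{ii}x_i+\sum_{j\neq i}\widetilde{w}_{ji}x_j$, where $x_{-i}=\{x_j\}_{j\ne i}$. Classifier: $h_{\theta,b}(x_i;x_{-i})=\mathrm{sign}(\theta^\top\phi(x_i;x_{-i})+b)\in\{\pm1\}$ with $\theta\in\mathbb{R}^\ell$, $b\in\mathbb{R}$, and $\mathrm{sign}(0)=+1$. Cost: $c(x,x')=\|x-x'\|_2$. Myopic best-response dynamics: $x_i^{(0)}=x_i$; at each round $t$ all users update concurrently by $x_i^{(t+1)}=\Delta_h(x_i^{(t)};x_{-i}^{(t)},\kappa_i^{(t)})$, where $\Delta_h(x_i;x_{-i},\kappa)=\arg\max_{x'\in\mathbb{R}^\ell} h(x';x_{-i})-c(x_i,x')-\kappa$ and $\kappa_i^{(t)}$ are accumulated costs ($\kappa_i^{(0)}=0$, $\kappa_i^{(t)}=\kappa_i^{(t-1)}+c(x_i^{(t-1)},x_i^{(t)})$). Concretely, user $i$ changes her features in a round only if she is currently classified $-1$ (given the others' current features) and there is a point $x'$ with $h(x';x_{-i})=+1$ and $c(x_i,x')\le 2$; in that case she moves to the minimum-cost such point (whose embedding lies exactly on the decision boundary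 $\theta^\top\phi+b=0$); otherwise she stays. *)

theory Defs
  imports "HOL-Analysis.Analysis"
begin

text \<open>Users are indexed by 0..<n; features live in real^'l.
  w j i is the embedding weight of user j in the embedding of user i.\<close>

definition embed :: "nat \<Rightarrow> (nat \<Rightarrow> nat \<Rightarrow> real) \<Rightarrow> (nat \<Rightarrow> real^'l) \<Rightarrow> nat \<Rightarrow> real^'l" where
  "embed n w X i = w i i *\<^sub>R X i + (\<Sum>j\<in>{..<n} - {i}. w j i *\<^sub>R X j)"

text \<open>Classifier h = sign(theta . phi + b) with sign 0 = +1, i.e. h = +1 iff the score is >= 0.\<close>
definition positive :: "nat \<Rightarrow> (nat \<Rightarrow> nat \<Rightarrow> real) \<Rightarrow> real^'l \<Rightarrow> real \<Rightarrow> (nat \<Rightarrow> real^'l) \<Rightarrow> nat \<Rightarrow> bool" where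
  "positive n w \<theta> b X i \<longleftrightarrow> \<theta> \<bullet> embed n w X i + b \<ge> 0"

definition best_response :: "nat \<Rightarrow> (nat \<Rightarrow> nat \<Rightarrow> real) \<Rightarrow> real^'l \<Rightarrow> real \<Rightarrow> (nat \<Rightarrow> real^'l) \<Rightarrow> nat \<Rightarrow> real^'l" where
  "best_response n w \<theta> b X i =
     (if \<not> positive n w \<theta> b X i \<and> (\<exists>x'. positive n w \<theta> b (X(i := x')) i \<and> dist (X i) x' \<le> 2)
      then arg_min (\<lambda>x'. dist (X i) x') (\<lambda>x'. positive n w \<theta> b (X(i := x')) i)
      else X i)"

primrec dyn :: "nat \<Rightarrow> (nat \<Rightarrow> nat \<Rightarrow> real) \<Rightarrow> real^'l \<Rightarrow> real \<Rightarrow> (nat \<Rightarrow> real^'l) \<Rightarrow> nat \<Rightarrow> (nat \<Rightarrow> real^'l)" where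
  "dyn n w \<theta> b X0 0 = X0"
| "dyn n w \<theta> b X0 (Suc t) =
     (\<lambda>i. if i < n then best_response n w \<theta> b (dyn n w \<theta> b X0 t) i else dyn n w \<theta> b X0 t i)"

end

theory Submission
  imports Defs
begin

text \<open>With nonnegative weights a user's score is monotone in the projections \<open>\<theta> \<bullet> x\<^sub>j\<close> of
  all users. A user who moves does so because she is classified negative, so her new point has
  strictly larger projection; hence all projections are nondecreasing along the dynamics. Right
  after a move the mover is positive even against the others' updated features, and by
  monotonicity she stays positive, so she never moves again.\<close>

lemma inner_embed:
  "\<theta> \<bullet> embed n w X i = w i i * (\<theta> \<bullet> X i) + (\<Sum>j\<in>{..<n} - {i}. w j i * (\<theta> \<bullet> X j))"
  unfolding embed_def by (simp add: inner_add_right inner_sum_right)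

lemma positive_mono:
  assumes "\<forall>j<n. w j i \<ge> 0" and "i < n"
    and "\<forall>j<n. \<theta> \<bullet> X j \<le> \<theta> \<bullet> Y j"
    and "positive n w \<theta> b X i"
  shows "positive n w \<theta> b Y i"
proof -
  have "w i i * (\<theta> \<bullet> X i) \<le> w i i * (\<theta> \<bullet> Y i)"
    using assms(1-3) by (simp add: mult_left_mono)
  moreover have "(\<Sum>j\<in>{..<n} - {i}. w j i * (\<theta> \<bullet> X j)) \<le> (\<Sum>j\<in>{..<n} - {i}. w j i * (\<theta> \<bullet> Y j))"
    using assms(1,3) by (intro sum_mono) (simp add: mult_left_mono)
  ultimately show ?thesis
    using assms(4) unfolding positive_def inner_embed by linarith
qed

lemma closed_positive_fun_upd: "closed {y. positive n w \<theta> b (X(i := y)) i}"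
proof -
  define c where "c = - ((\<Sum>j\<in>{..<n} - {i}. w j i * (\<theta> \<bullet> X j)) + b)"
  have "(\<Sum>j\<in>{..<n} - {i}. w j i * (\<theta> \<bullet> (X(i := y)) j)) = (\<Sum>j\<in>{..<n} - {i}. w j i * (\<theta> \<bullet> X j))"
    for y by (rule sum.cong) auto
  then have "positive n w \<theta> b (X(i := y)) i \<longleftrightarrow> (w i i *\<^sub>R \<theta>) \<bullet> y \<ge> c" for y
    unfolding positive_def inner_embed c_def by (simp add: inner_commute, linarith)
  then show ?thesis by (simp only:) (rule closed_halfspace_ge)
qed

lemma arg_min_dist_closed:
  fixes a :: "'a::heine_borel"
  assumes "closed {y. P y}" and "\<exists>y. P y"
  shows "P (arg_min (dist a) P)"
proof -
  obtain x where "P x" "\<And>y. P y \<Longrightarrow> dist a x \<le> dist a y"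
    using distance_attains_inf[of "{y. P y}" a] assms by auto
  then show ?thesis
    using arg_minI[where P = P and Q = P and f = "dist a"] by (meson not_less)
qed

lemma best_response_moves:
  assumes "best_response n w \<theta> b X i \<noteq> X i"
  shows "\<not> positive n w \<theta> b X i" and "positive n w \<theta> b (X(i := best_response n w \<theta> b X i)) i"
proof -
  let ?P = "\<lambda>y. positive n w \<theta> b (X(i := y)) i"
  have moving: "\<not> positive n w \<theta> b X i \<and> (\<exists>y. ?P y \<and> dist (X i) y \<le> 2)"
  proof (rule ccontr)
    assume "\<not> ?thesis"
    then have "best_response n w \<theta> b X i = X i"
      unfolding best_response_def by (rule if_not_P)
    with assms show False by contradiction
  qed
  then show "\<not> positive n w \<theta> b X i" by blast
  have "best_response n w \<theta> b X i = arg_min (dist (X i)) ?P"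
    unfolding best_response_def using moving by (rule if_P)
  moreover have "?P (arg_min (dist (X i)) ?P)"
    using closed_positive_fun_upd moving by (intro arg_min_dist_closed[where P = ?P]) blast+
  ultimately show "?P (best_response n w \<theta> b X i)" by simp
qed

lemma best_response_inner_gt:
  assumes "\<forall>j<n. w j i \<ge> 0" and "i < n"
    and "best_response n w \<theta> b X i \<noteq> X i"
  shows "\<theta> \<bullet> X i < \<theta> \<bullet> best_response n w \<theta> b X i"
proof (rule ccontr)
  let ?y = "best_response n w \<theta> b X i"
  assume "\<not> \<theta> \<bullet> X i < \<theta> \<bullet> ?y"
  then have "\<forall>j<n. \<theta> \<bullet> (X(i := ?y)) j \<le> \<theta> \<bullet> X j" by simp
  then have "positive n w \<theta> b X i"
    using positive_mono[of n w i] assms(1,2) best_response_moves(2)[OF assms(3)] by blast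
  then show False using best_response_moves(1)[OF assms(3)] by blast
qed

lemma incseq_inner_dyn:
  assumes "\<forall>i<n. \<forall>j<n. w j i \<ge> 0"
  shows "incseq (\<lambda>t. \<theta> \<bullet> dyn n w \<theta> b X0 t j)"
proof (rule incseq_SucI)
  fix t
  let ?X = "dyn n w \<theta> b X0 t"
  have "\<theta> \<bullet> ?X j \<le> \<theta> \<bullet> best_response n w \<theta> b ?X j" if "j < n"
  proof (cases "best_response n w \<theta> b ?X j = ?X j")
    case False
    have "\<forall>k<n. w k j \<ge> 0" using assms that by blast
    then show ?thesis by (intro less_imp_le best_response_inner_gt that False)
  qed simp
  then show "\<theta> \<bullet> ?X j \<le> \<theta> \<bullet> dyn n w \<theta> b X0 (Suc t) j" by simp
qed

lemma positive_dyn_mono: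
  assumes "\<forall>i<n. \<forall>j<n. w j i \<ge> 0" and "i < n" and "s \<le> t"
    and "positive n w \<theta> b (dyn n w \<theta> b X0 s) i"
  shows "positive n w \<theta> b (dyn n w \<theta> b X0 t) i"
proof -
  have "\<theta> \<bullet> dyn n w \<theta> b X0 s j \<le> \<theta> \<bullet> dyn n w \<theta> b X0 t j" for j
    using incseqD[OF incseq_inner_dyn[OF assms(1)] assms(3)] .
  then show ?thesis
    using positive_mono[of n w i \<theta> "dyn n w \<theta> b X0 s" "dyn n w \<theta> b X0 t" b] assms by blast
qed

lemma positive_dyn_after_move:
  assumes "\<forall>i<n. \<forall>j<n. w j i \<ge> 0" and "i < n"
    and "dyn n w \<theta> b X0 (Suc t) i \<noteq> dyn n w \<theta> b X0 t i"
  shows "positive n w \<theta> b (dyn n w \<theta> b X0 (Suc t)) i"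
proof -
  let ?X = "dyn n w \<theta> b X0 t" and ?Y = "dyn n w \<theta> b X0 (Suc t)"
  have "?Y i = best_response n w \<theta> b ?X i"
    using assms(2) by simp
  then have "positive n w \<theta> b (?X(i := ?Y i)) i"
    using best_response_moves(2)[of n w \<theta> b ?X i] assms(3) by simp
  moreover have "\<theta> \<bullet> (?X(i := ?Y i)) j \<le> \<theta> \<bullet> ?Y j" for j
    using incseq_SucD[OF incseq_inner_dyn[OF assms(1), of \<theta> b X0 j], of t] by (simp del: dyn.simps)
  ultimately show ?thesis
    using positive_mono[of n w i \<theta> "?X(i := ?Y i)" ?Y b] assms(1,2) by blast
qed

lemma dyn_Suc_eq_if_positive:
  assumes "positive n w \<theta> b (dyn n w \<theta> b X0 t) i"
  shows "dyn n w \<theta> b X0 (Suc t) i = dyn n w \<theta> b X0 t i"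
  using assms by (simp add: best_response_def)

lemma dyn_moves_at_most_once:
  assumes "\<forall>i<n. \<forall>j<n. w j i \<ge> 0" and "i < n"
    and "dyn n w \<theta> b X0 (Suc s) i \<noteq> dyn n w \<theta> b X0 s i"
    and "dyn n w \<theta> b X0 (Suc t) i \<noteq> dyn n w \<theta> b X0 t i"
  shows "s = t"
proof -
  have never_again: "dyn n w \<theta> b X0 (Suc u) i = dyn n w \<theta> b X0 u i"
    if "dyn n w \<theta> b X0 (Suc r) i \<noteq> dyn n w \<theta> b X0 r i" and "r < u" for r u
  proof -
    have "positive n w \<theta> b (dyn n w \<theta> b X0 (Suc r)) i"
      using positive_dyn_after_move[OF assms(1,2) that(1)] .
    then have "positive n w \<theta> b (dyn n w \<theta> b X0 u) i"
      by (rule positive_dyn_mono[OF assms(1,2) Suc_leI[OF that(2)]])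
    then show ?thesis by (rule dyn_Suc_eq_if_positive)
  qed
  show ?thesis
    using never_again[OF assms(3)] never_again[OF assms(4)] assms(3,4) by (meson linorder_neqE_nat)
qed

theorem proposition1:
  fixes n :: nat and X0 :: "nat \<Rightarrow> real^'l" and w :: "nat \<Rightarrow> nat \<Rightarrow> real"
    and \<theta> :: "real^'l" and b :: real
  assumes "\<forall>i<n. \<forall>j<n. w j i \<ge> 0"
  shows "\<forall>i<n. \<forall>t1\<ge>1. \<forall>t2\<ge>1.
           dyn n w \<theta> b X0 t1 i \<noteq> dyn n w \<theta> b X0 (t1 - 1) i \<and>
           dyn n w \<theta> b X0 t2 i \<noteq> dyn n w \<theta> b X0 (t2 - 1) i \<longrightarrow> t1 = t2"
proof (intro allI impI)
  fix i t1 t2 :: nat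
  assume "i < n" and "t1 \<ge> 1" and "t2 \<ge> 1"
    and moves: "dyn n w \<theta> b X0 t1 i \<noteq> dyn n w \<theta> b X0 (t1 - 1) i \<and>
         dyn n w \<theta> b X0 t2 i \<noteq> dyn n w \<theta> b X0 (t2 - 1) i"
  obtain s t where "t1 = Suc s" and "t2 = Suc t"
    using \<open>t1 \<ge> 1\<close> \<open>t2 \<ge> 1\<close> by (metis Suc_pred' less_eq_Suc_le One_nat_def)
  then show "t1 = t2"
    using moves dyn_moves_at_most_once[OF assms \<open>i < n\<close>, of \<theta> b X0 s t]
    by (simp del: dyn.simps)
qed

end
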